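(* Let $\pi$ be a prior density on $\mathbb{R}^d$ and let $M^{\pi}(x)=\int_{\mathbb{R}^d}p_{A,\nu,\gamma}(x\mid\theta)\pi(\theta)\,d\theta$ be the corresponding marginal density. Then \[ B_{\mathsf{KL}}(\pi,\hat p^{\pi_U})-B_{\mathsf{KL}}(\pi,\hat p^{\pi})=\int_{\mathbb{R}^d}\mathsf{KL}\big(\hat p^{\pi}(\cdot\mid x)\,\big\|\,\hat p^{\pi_U}(\cdot\mid x)\big)\,M^{\pi}(x)\,dx, \] and $M^{\pi}$ is an invariant distribution of $\hat p^{\pi}$ in the sense that \[ \int_{\mathbb{R}^d}\hat p^{\pi}(y\mid x)\,M^{\pi}(y)\,dy=M^{\pi}(x)\quad\text{for all }x. \]
   Context: Fix $d\ge 1$ and a known Lévy–Khintchine triplet $(A,\nu,\gamma)$ on $\mathbb{R}^d$ ($A$ the Gaussian covariance matrix, $\nu$ the Lévy measure, $\gamma$ the center). Consider the location model $X=\theta+\varepsilon$, $\varepsilon\sim\mathrm{ID}(A,\nu,\gamma)$ (the infinitely divisible law with this triplet), with unknown $\theta\in\mathbb{R}^d$, and write $p_{A,\nu,\gamma}(x\mid\theta)$ for the density of $X$; a future observation $Y$ has density $p_{A,\nu,\gamma}(y\mid\theta)$. For a predictive density $\hat p(\cdot\mid x)$, the KL loss is $L_{\mathsf{KL}}(\theta,\hat p(\cdot\mid x))=\int\log\frac{p_{A,\nu,\gamma}(y\mid\theta)}{\hat p(y\mid x)}p_{A,\nu,\gamma}(y\mid\theta)\,dy$, the risk is $R_{\mathsf{KL}}(\theta,\hat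 p)=\int L_{\mathsf{KL}}(\theta,\hat p(\cdot\mid x))p_{A,\nu,\gamma}(x\mid\theta)\,dx$, and the Bayes risk under prior $\pi$ is $B_{\mathsf{KL}}(\pi,\hat p)=\int R_{\mathsf{KL}}(\theta,\hat p)\pi(\theta)\,d\theta$. The Bayes predictive density under a (possibly improper) prior $\pi$ is $\hat p^{\pi}(y\mid x)=\int p_{A,\nu,\gamma}(y\mid\theta)\pi(\theta\mid x)\,d\theta=\frac{1}{M^{\pi}(x)}\int p_{A,\nu,\gamma}(y\mid\theta)p_{A,\nu,\gamma}(x\mid\theta)\pi(\theta)\,d\theta$. $\pi_U\equiv 1$ denotes the (improper) uniform prior, so $\hat p^{\pi_U}(y\mid x)=\int p_{A,\nu,\gamma}(y\mid\theta)p_{A,\nu,\gamma}(x\mid\theta)\,d\theta$. *)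

theory Defs
  imports "HOL-Probability.Probability"
begin

text \<open>R^d is modelled by an arbitrary Euclidean space 'a (dimension DIM('a) \<ge> 1).\<close>

definition levy_measure :: "'a::euclidean_space measure \<Rightarrow> bool" where
  "levy_measure \<nu> \<longleftrightarrow> sets \<nu> = sets borel \<and> emeasure \<nu> {0} = 0 \<and>
     (\<integral>\<^sup>+ x. ennreal (min 1 ((norm x)\<^sup>2)) \<partial>\<nu>) < \<infinity>"

definition covariance_op :: "('a::euclidean_space \<Rightarrow> 'a) \<Rightarrow> bool" where
  "covariance_op A \<longleftrightarrow> linear A \<and> (\<forall>x y. A x \<bullet> y = x \<bullet> A y) \<and> (\<forall>x. 0 \<le> x \<bullet> A x)"

definition levy_triplet :: "('a::euclidean_space \<Rightarrow> 'a) \<Rightarrow> 'a measure \<Rightarrow> 'a \<Rightarrow> bool" where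
  "levy_triplet A \<nu> \<gamma> \<longleftrightarrow> covariance_op A \<and> levy_measure \<nu>"

definition levy_exponent :: "('a::euclidean_space \<Rightarrow> 'a) \<Rightarrow> 'a measure \<Rightarrow> 'a \<Rightarrow> 'a \<Rightarrow> complex" where
  "levy_exponent A \<nu> \<gamma> u =
     \<i> * complex_of_real (\<gamma> \<bullet> u) - complex_of_real ((u \<bullet> A u) / 2) +
     (CLINT x|\<nu>. exp (\<i> * complex_of_real (u \<bullet> x)) - 1
                  - \<i> * complex_of_real ((u \<bullet> x) * indicator (cball 0 1) x))"

definition ID_density :: "('a::euclidean_space \<Rightarrow> 'a) \<Rightarrow> 'a measure \<Rightarrow> 'a \<Rightarrow> ('a \<Rightarrow> real) \<Rightarrow> bool" where
  "ID_density A \<nu> \<gamma> f \<longleftrightarrow> levy_triplet A \<nu> \<gamma> \<and>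
     f \<in> borel_measurable lborel \<and> (\<forall>x. 0 \<le> f x) \<and>
     prob_space (density lborel (\<lambda>x. ennreal (f x))) \<and>
     (\<forall>u. (CLINT x|lborel. complex_of_real (f x) * exp (\<i> * complex_of_real (u \<bullet> x)))
            = exp (levy_exponent A \<nu> \<gamma> u))"

text \<open>Location model: density of X = theta + eps at x.\<close>
definition loc_dens :: "('a::euclidean_space \<Rightarrow> real) \<Rightarrow> 'a \<Rightarrow> 'a \<Rightarrow> real" where
  "loc_dens f x \<theta> = f (x - \<theta>)"

definition marginal :: "('a::euclidean_space \<Rightarrow> real) \<Rightarrow> ('a \<Rightarrow> real) \<Rightarrow> 'a \<Rightarrow> real" where
  "marginal f \<pi> x = (\<integral>\<theta>. loc_dens f x \<theta> * \<pi> \<theta> \<partial>lborel)"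

text \<open>Predictive densities are functions x \<mapsto> (y \<mapsto> density at y given x).\<close>
definition bayes_pred :: "('a::euclidean_space \<Rightarrow> real) \<Rightarrow> ('a \<Rightarrow> real) \<Rightarrow> 'a \<Rightarrow> 'a \<Rightarrow> real" where
  "bayes_pred f \<pi> x y =
     (\<integral>\<theta>. loc_dens f y \<theta> * loc_dens f x \<theta> * \<pi> \<theta> \<partial>lborel) / marginal f \<pi> x"

definition unif_pred :: "('a::euclidean_space \<Rightarrow> real) \<Rightarrow> 'a \<Rightarrow> 'a \<Rightarrow> real" where
  "unif_pred f x y = (\<integral>\<theta>. loc_dens f y \<theta> * loc_dens f x \<theta> \<partial>lborel)"

definition KL_div :: "('a::euclidean_space \<Rightarrow> real) \<Rightarrow> ('a \<Rightarrow> real) \<Rightarrow> real" where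
  "KL_div p q = (\<integral>y. ln (p y / q y) * p y \<partial>lborel)"

definition KL_loss :: "('a::euclidean_space \<Rightarrow> real) \<Rightarrow> 'a \<Rightarrow> ('a \<Rightarrow> real) \<Rightarrow> real" where
  "KL_loss f \<theta> q = KL_div (\<lambda>y. loc_dens f y \<theta>) q"

definition KL_risk :: "('a::euclidean_space \<Rightarrow> real) \<Rightarrow> 'a \<Rightarrow> ('a \<Rightarrow> 'a \<Rightarrow> real) \<Rightarrow> real" where
  "KL_risk f \<theta> P = (\<integral>x. KL_loss f \<theta> (P x) * loc_dens f x \<theta> \<partial>lborel)"

definition bayes_risk :: "('a::euclidean_space \<Rightarrow> real) \<Rightarrow> ('a \<Rightarrow> real) \<Rightarrow> ('a \<Rightarrow> 'a \<Rightarrow> real) \<Rightarrow> real" where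
  "bayes_risk f \<pi> P = (\<integral>\<theta>. KL_risk f \<theta> P * \<pi> \<theta> \<partial>lborel)"

text \<open>Finiteness of the Bayes risk: the full integrand in (x,y,theta) is absolutely integrable.\<close>
definition finite_bayes_risk :: "('a::euclidean_space \<Rightarrow> real) \<Rightarrow> ('a \<Rightarrow> real) \<Rightarrow> ('a \<Rightarrow> 'a \<Rightarrow> real) \<Rightarrow> bool" where
  "finite_bayes_risk f \<pi> P \<longleftrightarrow>
     integrable (lborel \<Otimes>\<^sub>M lborel \<Otimes>\<^sub>M lborel)
       (\<lambda>(x, y, \<theta>). ln (loc_dens f y \<theta> / P x y) * loc_dens f y \<theta> * loc_dens f x \<theta> * \<pi> \<theta>)"

end

theory Submission
  imports Defs
begin

(* With w(x, y, theta) = f(y - theta) f(x - theta) pi(theta), the Bayes risk of a predictive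
   density q is the integral of ln (f(y - theta) / q(x, y)) against w.  Where w > 0 both
   predictive densities are positive almost everywhere, so the difference of the two risks is
   the integral of ln (p^pi(y|x) / p^U(y|x)) against w.  Integrating theta out first turns w into
   the joint marginal m(x, y) = p^pi(y|x) M(x), which yields the KL form.  Invariance holds
   because m is symmetric in x and y and, by Tonelli and translation invariance of Lebesgue
   measure, integrates in y to M(x). *)

lemma AE_nonzero_imp_integral_pos:
  fixes g :: "'a \<Rightarrow> real"
  assumes "integrable M g" and "\<And>x. 0 \<le> g x"
  shows "AE x in M. g x \<noteq> 0 \<longrightarrow> 0 < integral\<^sup>L M g"
proof (cases "integral\<^sup>L M g = 0")
  case True
  then have "AE x in M. g x = 0"
    using integral_nonneg_eq_0_iff_AE[OF assms(1)] assms(2) by simp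
  then show ?thesis by eventually_elim simp
next
  case False
  moreover have "0 \<le> integral\<^sup>L M g" by (intro integral_nonneg_AE) (simp add: assms(2))
  ultimately show ?thesis by simp
qed

context sigma_finite_measure
begin

lemma nn_integral_triple:
  assumes [measurable]: "g \<in> borel_measurable (M \<Otimes>\<^sub>M M \<Otimes>\<^sub>M M)"
  shows "integral\<^sup>N (M \<Otimes>\<^sub>M M \<Otimes>\<^sub>M M) g = (\<integral>\<^sup>+x. \<integral>\<^sup>+y. \<integral>\<^sup>+z. g (x, y, z) \<partial>M \<partial>M \<partial>M)"
proof -
  interpret P: pair_sigma_finite M M ..
  have "integral\<^sup>N (M \<Otimes>\<^sub>M M \<Otimes>\<^sub>M M) g = (\<integral>\<^sup>+x. \<integral>\<^sup>+p. g (x, p) \<partial>(M \<Otimes>\<^sub>M M) \<partial>M)"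
    by (rule P.nn_integral_fst[symmetric]) simp
  also have "\<dots> = (\<integral>\<^sup>+x. \<integral>\<^sup>+y. \<integral>\<^sup>+z. g (x, y, z) \<partial>M \<partial>M \<partial>M)"
    by (intro nn_integral_cong nn_integral_fst[symmetric]) measurable
  finally show ?thesis .
qed

lemma nn_integral_triple_rotate:
  assumes [measurable]: "g \<in> borel_measurable (M \<Otimes>\<^sub>M M \<Otimes>\<^sub>M M)"
  shows "(\<integral>\<^sup>+(z, x, y). g (x, y, z) \<partial>(M \<Otimes>\<^sub>M M \<Otimes>\<^sub>M M)) = integral\<^sup>N (M \<Otimes>\<^sub>M M \<Otimes>\<^sub>M M) g"
proof -
  interpret P: pair_sigma_finite M M ..
  have "(\<integral>\<^sup>+(z, x, y). g (x, y, z) \<partial>(M \<Otimes>\<^sub>M M \<Otimes>\<^sub>M M)) = (\<integral>\<^sup>+z. \<integral>\<^sup>+x. \<integral>\<^sup>+y. g (x, y, z) \<partial>M \<partial>M \<partial>M)"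
    by (subst nn_integral_triple) auto
  also have "\<dots> = (\<integral>\<^sup>+x. \<integral>\<^sup>+z. \<integral>\<^sup>+y. g (x, y, z) \<partial>M \<partial>M \<partial>M)"
    by (rule P.Fubini') measurable
  also have "\<dots> = (\<integral>\<^sup>+x. \<integral>\<^sup>+y. \<integral>\<^sup>+z. g (x, y, z) \<partial>M \<partial>M \<partial>M)"
    by (intro nn_integral_cong P.Fubini') measurable
  also have "\<dots> = integral\<^sup>N (M \<Otimes>\<^sub>M M \<Otimes>\<^sub>M M) g"
    by (rule nn_integral_triple[symmetric]) fact
  finally show ?thesis .
qed

lemma distr_triple_rotate:
  "distr (M \<Otimes>\<^sub>M M \<Otimes>\<^sub>M M) (M \<Otimes>\<^sub>M M \<Otimes>\<^sub>M M) (\<lambda>(z, x, y). (x, y, z)) = M \<Otimes>\<^sub>M M \<Otimes>\<^sub>M M"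
  (is "?R = _")
proof (rule measure_eqI)
  fix A assume "A \<in> sets ?R"
  then have [measurable]: "A \<in> sets (M \<Otimes>\<^sub>M M \<Otimes>\<^sub>M M)" by simp
  have "emeasure ?R A = (\<integral>\<^sup>+p. indicator A p \<partial>?R)"
    by simp
  also have "\<dots> = (\<integral>\<^sup>+(z, x, y). indicator A (x, y, z) \<partial>(M \<Otimes>\<^sub>M M \<Otimes>\<^sub>M M))"
    by (subst nn_integral_distr) (auto simp: split_beta')
  also have "\<dots> = emeasure (M \<Otimes>\<^sub>M M \<Otimes>\<^sub>M M) A"
    by (subst nn_integral_triple_rotate) auto
  finally show "emeasure ?R A = emeasure (M \<Otimes>\<^sub>M M \<Otimes>\<^sub>M M) A" .
qed simp

lemma integral_triple:
  fixes G :: "'a \<times> 'a \<times> 'a \<Rightarrow> 'b::{banach, second_countable_topology}"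
  assumes G: "integrable (M \<Otimes>\<^sub>M M \<Otimes>\<^sub>M M) G"
  shows "integral\<^sup>L (M \<Otimes>\<^sub>M M \<Otimes>\<^sub>M M) G = (\<integral>x. \<integral>y. \<integral>z. G (x, y, z) \<partial>M \<partial>M \<partial>M)"
proof -
  interpret P: pair_sigma_finite M M ..
  interpret P3: pair_sigma_finite M "M \<Otimes>\<^sub>M M" ..
  have [measurable]: "G \<in> borel_measurable (M \<Otimes>\<^sub>M M \<Otimes>\<^sub>M M)" using G by simp
  have "integral\<^sup>L (M \<Otimes>\<^sub>M M \<Otimes>\<^sub>M M) G = (\<integral>x. \<integral>p. G (x, p) \<partial>(M \<Otimes>\<^sub>M M) \<partial>M)"
    by (rule P3.integral_fst'[OF G, symmetric])
  also have "\<dots> = (\<integral>x. \<integral>y. \<integral>z. G (x, y, z) \<partial>M \<partial>M \<partial>M)"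
    using P3.AE_integrable_fst'[OF G]
    by (intro integral_cong_AE) (auto elim!: eventually_mono intro: P.integral_fst'[symmetric])
  finally show ?thesis .
qed

lemma integral_triple_rotate:
  fixes G :: "'a \<times> 'a \<times> 'a \<Rightarrow> 'b::{banach, second_countable_topology}"
  assumes G: "integrable (M \<Otimes>\<^sub>M M \<Otimes>\<^sub>M M) G"
  shows "(\<integral>z. \<integral>x. \<integral>y. G (x, y, z) \<partial>M \<partial>M \<partial>M) = integral\<^sup>L (M \<Otimes>\<^sub>M M \<Otimes>\<^sub>M M) G"
proof -
  have [measurable]: "G \<in> borel_measurable (M \<Otimes>\<^sub>M M \<Otimes>\<^sub>M M)" using G by simp
  have rotate: "(\<lambda>(z, x, y). (x, y, z)) \<in> (M \<Otimes>\<^sub>M M \<Otimes>\<^sub>M M) \<rightarrow>\<^sub>M (M \<Otimes>\<^sub>M M \<Otimes>\<^sub>M M)"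
    by measurable
  have "integrable (M \<Otimes>\<^sub>M M \<Otimes>\<^sub>M M) (\<lambda>(z, x, y). G (x, y, z))"
    using integrable_distr_eq[OF rotate, of G] G unfolding distr_triple_rotate by (simp add: split_beta')
  then have "(\<integral>z. \<integral>x. \<integral>y. G (x, y, z) \<partial>M \<partial>M \<partial>M) = (\<integral>(z, x, y). G (x, y, z) \<partial>(M \<Otimes>\<^sub>M M \<Otimes>\<^sub>M M))"
    by (simp add: integral_triple)
  also have "\<dots> = integral\<^sup>L (M \<Otimes>\<^sub>M M \<Otimes>\<^sub>M M) G"
    using integral_distr[OF rotate, of G] unfolding distr_triple_rotate by (simp add: split_beta')
  finally show ?thesis .
qed

lemma AE_triple_measure:
  assumes [measurable]: "Measurable.pred (M \<Otimes>\<^sub>M M \<Otimes>\<^sub>M M) P"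
    and "AE x in M. AE y in M. AE z in M. P (x, y, z)"
  shows "AE p in M \<Otimes>\<^sub>M M \<Otimes>\<^sub>M M. P p"
proof -
  interpret P: pair_sigma_finite M M ..
  interpret P3: pair_sigma_finite M "M \<Otimes>\<^sub>M M" ..
  show ?thesis
  proof (rule P3.AE_pair_measure)
    show "AE x in M. AE q in M \<Otimes>\<^sub>M M. P (x, q)"
      using assms(2) AE_space
    proof eventually_elim
      case (elim x)
      then show ?case by (intro P.AE_pair_measure) auto
    qed
  qed simp
qed

text \<open>Integrability of the sections is needed: a non-integrable function has Bochner integral 0.\<close>

lemma AE_triple_integral_pos:
  fixes w :: "'a \<times> 'a \<times> 'a \<Rightarrow> real"
  assumes [measurable]: "w \<in> borel_measurable (M \<Otimes>\<^sub>M M \<Otimes>\<^sub>M M)" and "\<And>p. 0 \<le> w p"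
    and "\<And>x. x \<in> space M \<Longrightarrow> AE y in M. integrable M (\<lambda>z. w (x, y, z))"
  shows "AE (x, y, z) in M \<Otimes>\<^sub>M M \<Otimes>\<^sub>M M. w (x, y, z) \<noteq> 0 \<longrightarrow> 0 < (\<integral>z'. w (x, y, z') \<partial>M)"
proof -
  have "AE x in M. AE y in M. AE z in M. w (x, y, z) \<noteq> 0 \<longrightarrow> 0 < (\<integral>z'. w (x, y, z') \<partial>M)"
    using AE_space
  proof eventually_elim
    case (elim x)
    from assms(3)[OF elim] show ?case
      by eventually_elim (rule AE_nonzero_imp_integral_pos, simp_all add: assms(2))
  qed
  then show ?thesis by (intro AE_triple_measure) simp_all
qed

end

lemma (in pair_sigma_finite) iterated_integral_nonneg_eq:
  fixes h :: "'a \<times> 'b \<Rightarrow> real"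
  assumes [measurable]: "h \<in> borel_measurable (M1 \<Otimes>\<^sub>M M2)" and "\<And>p. 0 \<le> h p"
    and "(\<integral>\<^sup>+x. \<integral>\<^sup>+y. h (x, y) \<partial>M2 \<partial>M1) = ennreal c" and "0 \<le> c"
  shows "(\<integral>x. \<integral>y. h (x, y) \<partial>M2 \<partial>M1) = c"
proof -
  have nn: "integral\<^sup>N (M1 \<Otimes>\<^sub>M M2) h = ennreal c"
    using M2.nn_integral_fst[of "\<lambda>p. ennreal (h p)"] assms(3) by simp
  have int: "integrable (M1 \<Otimes>\<^sub>M M2) h"
    using nn assms(2) by (intro integrableI_nonneg) auto
  have "(\<integral>x. \<integral>y. h (x, y) \<partial>M2 \<partial>M1) = integral\<^sup>L (M1 \<Otimes>\<^sub>M M2) h"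
    by (rule integral_fst'[OF int])
  also have "\<dots> = c"
    using nn assms(2,4) by (subst integral_eq_nn_integral) auto
  finally show ?thesis .
qed

lemma nn_integral_lborel_translate:
  fixes g :: "'a::euclidean_space \<Rightarrow> ennreal"
  assumes [measurable]: "g \<in> borel_measurable borel"
  shows "(\<integral>\<^sup>+y. g (y - t) \<partial>lborel) = integral\<^sup>N lborel g"
proof -
  have "integral\<^sup>N lborel g = (\<integral>\<^sup>+y. g y \<partial>distr lborel borel ((+) (- t)))"
    by (simp add: lborel_distr_plus)
  also have "\<dots> = (\<integral>\<^sup>+y. g (- t + y) \<partial>lborel)"
    by (subst nn_integral_distr) auto
  finally show ?thesis by (simp add: add.commute)
qed

lemma nn_integral_lborel_reflect:
  fixes g :: "'a::euclidean_space \<Rightarrow> ennreal"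
  assumes [measurable]: "g \<in> borel_measurable borel"
  shows "(\<integral>\<^sup>+t. g (x - t) \<partial>lborel) = integral\<^sup>N lborel g"
proof -
  have "lborel = distr lborel borel (\<lambda>t. x + (-1::real) *\<^sub>R t)"
    using lborel_affine[of "-1::real" x] by (simp add: density_1)
  then have "integral\<^sup>N lborel g = (\<integral>\<^sup>+t. g t \<partial>distr lborel borel (\<lambda>t. x + (-1::real) *\<^sub>R t))"
    by simp
  also have "\<dots> = (\<integral>\<^sup>+t. g (x + (-1::real) *\<^sub>R t) \<partial>lborel)"
    by (subst nn_integral_distr) auto
  finally show ?thesis by simp
qed

lemma nn_integral_convolution:
  fixes f g :: "'a::euclidean_space \<Rightarrow> ennreal"
  assumes [measurable]: "f \<in> borel_measurable borel" "g \<in> borel_measurable borel"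
  shows "(\<integral>\<^sup>+y. \<integral>\<^sup>+t. f (y - t) * g t \<partial>lborel \<partial>lborel) = integral\<^sup>N lborel f * integral\<^sup>N lborel g"
proof -
  have "(\<integral>\<^sup>+y. \<integral>\<^sup>+t. f (y - t) * g t \<partial>lborel \<partial>lborel) = (\<integral>\<^sup>+t. \<integral>\<^sup>+y. f (y - t) * g t \<partial>lborel \<partial>lborel)"
    by (rule lborel_pair.Fubini') measurable
  also have "\<dots> = (\<integral>\<^sup>+t. integral\<^sup>N lborel f * g t \<partial>lborel)"
    by (simp add: nn_integral_multc nn_integral_lborel_translate)
  also have "\<dots> = integral\<^sup>N lborel f * integral\<^sup>N lborel g"
    by (simp add: nn_integral_cmult)
  finally show ?thesis .
qed

definition joint_marginal :: "('a::euclidean_space \<Rightarrow> real) \<Rightarrow> ('a \<Rightarrow> real) \<Rightarrow> 'a \<Rightarrow> 'a \<Rightarrow> real" where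
  "joint_marginal f \<pi> x y = (\<integral>\<theta>. loc_dens f y \<theta> * loc_dens f x \<theta> * \<pi> \<theta> \<partial>lborel)"

lemma bayes_pred_eq: "bayes_pred f \<pi> x y = joint_marginal f \<pi> x y / marginal f \<pi> x"
  unfolding bayes_pred_def joint_marginal_def ..

lemma unif_pred_eq: "unif_pred f x y = joint_marginal f (\<lambda>_. 1) x y"
  unfolding unif_pred_def joint_marginal_def by simp

lemma joint_marginal_commute: "joint_marginal f \<pi> x y = joint_marginal f \<pi> y x"
  unfolding joint_marginal_def by (simp add: mult_ac)

definition risk_integrand ::
    "('a::euclidean_space \<Rightarrow> real) \<Rightarrow> ('a \<Rightarrow> real) \<Rightarrow> ('a \<Rightarrow> 'a \<Rightarrow> real) \<Rightarrow> 'a \<times> 'a \<times> 'a \<Rightarrow> real" where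
  "risk_integrand f \<pi> P =
     (\<lambda>(x, y, \<theta>). ln (loc_dens f y \<theta> / P x y) * loc_dens f y \<theta> * loc_dens f x \<theta> * \<pi> \<theta>)"

lemma bayes_risk_eq_integral:
  assumes "finite_bayes_risk f \<pi> P"
  shows "bayes_risk f \<pi> P = integral\<^sup>L (lborel \<Otimes>\<^sub>M lborel \<Otimes>\<^sub>M lborel) (risk_integrand f \<pi> P)"
  using lborel.integral_triple_rotate[OF assms[unfolded finite_bayes_risk_def]]
  by (simp add: bayes_risk_def KL_risk_def KL_loss_def KL_div_def risk_integrand_def)

locale location_model =
  fixes f :: "'a::euclidean_space \<Rightarrow> real"
  assumes density_borel[measurable]: "f \<in> borel_measurable borel"
    and density_nonneg: "\<And>x. 0 \<le> f x"
    and density_total: "(\<integral>\<^sup>+x. ennreal (f x) \<partial>lborel) = 1"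

lemma ID_density_location_model:
  assumes "ID_density A \<nu> \<gamma> f"
  shows "location_model f"
proof
  show f_borel[measurable]: "f \<in> borel_measurable borel" and "0 \<le> f x" for x
    using assms by (simp_all add: ID_density_def)
  have "prob_space (density lborel (\<lambda>x. ennreal (f x)))"
    using assms by (simp add: ID_density_def)
  from prob_space.emeasure_space_1[OF this]
  show "(\<integral>\<^sup>+x. ennreal (f x) \<partial>lborel) = 1"
    by (simp add: emeasure_density)
qed

locale location_prior = location_model f for f :: "'a::euclidean_space \<Rightarrow> real" +
  fixes \<pi> :: "'a \<Rightarrow> real"
  assumes prior_borel[measurable]: "\<pi> \<in> borel_measurable borel"
    and prior_nonneg: "\<And>\<theta>. 0 \<le> \<pi> \<theta>"
    and marginal_integrable: "\<And>x. integrable lborel (\<lambda>\<theta>. loc_dens f x \<theta> * \<pi> \<theta>)"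
    and marginal_pos: "\<And>x. 0 < marginal f \<pi> x"

lemma (in location_model) location_prior_uniform: "location_prior f (\<lambda>_. 1)"
proof
  have "(\<integral>\<^sup>+\<theta>. ennreal (f (x - \<theta>)) \<partial>lborel) = 1" for x
    using nn_integral_lborel_reflect[of "\<lambda>t. ennreal (f t)"] density_total by simp
  then have "integrable lborel (\<lambda>\<theta>. f (x - \<theta>))" and "marginal f (\<lambda>_. 1) x = 1" for x
    using density_nonneg by (auto intro: integrableI_nonneg simp: marginal_def loc_dens_def integral_eq_nn_integral)
  then show "integrable lborel (\<lambda>\<theta>. loc_dens f x \<theta> * 1)" and "0 < marginal f (\<lambda>_. 1) x" for x
    by (simp_all add: loc_dens_def)
qed simp_all

context location_prior
begin

lemma nn_integral_marginal: "(\<integral>\<^sup>+\<theta>. ennreal (f (x - \<theta>) * \<pi> \<theta>) \<partial>lborel) = marginal f \<pi> x"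
  using nn_integral_eq_integral[OF marginal_integrable]
  by (simp add: marginal_def loc_dens_def density_nonneg prior_nonneg)

lemma nn_integral_joint_marginal:
  "(\<integral>\<^sup>+y. \<integral>\<^sup>+\<theta>. ennreal (f (y - \<theta>) * f (x - \<theta>) * \<pi> \<theta>) \<partial>lborel \<partial>lborel) = marginal f \<pi> x"
proof -
  have "ennreal (f (y - \<theta>) * f (x - \<theta>) * \<pi> \<theta>) = ennreal (f (y - \<theta>)) * ennreal (f (x - \<theta>) * \<pi> \<theta>)" for y \<theta>
    by (simp add: ennreal_mult density_nonneg prior_nonneg mult.assoc)
  then show ?thesis
    using nn_integral_convolution[of "\<lambda>t. ennreal (f t)" "\<lambda>\<theta>. ennreal (f (x - \<theta>) * \<pi> \<theta>)"]
    by (simp only: density_total nn_integral_marginal) simp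
qed

lemma integral_joint_marginal: "(\<integral>y. joint_marginal f \<pi> x y \<partial>lborel) = marginal f \<pi> x"
  unfolding joint_marginal_def loc_dens_def
  by (rule lborel_pair.iterated_integral_nonneg_eq[where h="\<lambda>(y, \<theta>). f (y - \<theta>) * f (x - \<theta>) * \<pi> \<theta>", simplified])
     (auto simp: nn_integral_joint_marginal density_nonneg prior_nonneg less_imp_le[OF marginal_pos])

lemma bayes_pred_invariant: "(\<integral>y. bayes_pred f \<pi> y x * marginal f \<pi> y \<partial>lborel) = marginal f \<pi> x"
proof -
  have "bayes_pred f \<pi> y x * marginal f \<pi> y = joint_marginal f \<pi> x y" for y
    using marginal_pos[of y] by (simp add: bayes_pred_eq joint_marginal_commute)
  then show ?thesis by (simp add: integral_joint_marginal)
qed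

lemma AE_joint_marginal_pos:
  "AE (x, y, \<theta>) in lborel \<Otimes>\<^sub>M lborel \<Otimes>\<^sub>M lborel.
     loc_dens f y \<theta> * loc_dens f x \<theta> * \<pi> \<theta> \<noteq> 0 \<longrightarrow> 0 < joint_marginal f \<pi> x y"
proof -
  let ?w = "\<lambda>(x, y, \<theta>). f (y - \<theta>) * f (x - \<theta>) * \<pi> \<theta>"
  have "AE y in lborel. integrable lborel (\<lambda>\<theta>. f (y - \<theta>) * f (x - \<theta>) * \<pi> \<theta>)" for x
  proof -
    have "AE y in lborel. (\<integral>\<^sup>+\<theta>. ennreal (f (y - \<theta>) * f (x - \<theta>) * \<pi> \<theta>) \<partial>lborel) \<noteq> \<infinity>"
      by (rule nn_integral_PInf_AE) (simp_all add: nn_integral_joint_marginal)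
    then show ?thesis
      by eventually_elim (auto intro!: integrableI_nonneg simp: density_nonneg prior_nonneg less_top)
  qed
  then have "AE (x, y, \<theta>) in lborel \<Otimes>\<^sub>M lborel \<Otimes>\<^sub>M lborel.
      ?w (x, y, \<theta>) \<noteq> 0 \<longrightarrow> 0 < (\<integral>\<theta>'. ?w (x, y, \<theta>') \<partial>lborel)"
    by (intro lborel.AE_triple_integral_pos) (auto simp: density_nonneg prior_nonneg)
  then show ?thesis by (simp add: joint_marginal_def loc_dens_def)
qed

lemma risk_integrand_diff_AE:
  "AE p in lborel \<Otimes>\<^sub>M lborel \<Otimes>\<^sub>M lborel.
     risk_integrand f \<pi> (unif_pred f) p - risk_integrand f \<pi> (bayes_pred f \<pi>) p =
       (case p of (x, y, \<theta>) \<Rightarrow>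
          ln (bayes_pred f \<pi> x y / unif_pred f x y) * loc_dens f y \<theta> * loc_dens f x \<theta> * \<pi> \<theta>)"
proof -
  interpret uniform: location_prior f "\<lambda>_. 1" by (rule location_prior_uniform)
  show ?thesis
    using AE_joint_marginal_pos uniform.AE_joint_marginal_pos
  proof eventually_elim
    case (elim p)
    obtain x y \<theta> where p: "p = (x, y, \<theta>)" by (cases p)
    show ?case
    proof (cases "loc_dens f y \<theta> * loc_dens f x \<theta> * \<pi> \<theta> = 0")
      case True
      then show ?thesis by (auto simp: p risk_integrand_def)
    next
      case False
      then have "0 < loc_dens f y \<theta>"
        using density_nonneg[of "y - \<theta>"] by (auto simp: loc_dens_def less_le)
      moreover have "0 < bayes_pred f \<pi> x y" and "0 < unif_pred f x y"
        using elim False marginal_pos[of x] by (simp_all add: p bayes_pred_eq unif_pred_eq)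
      ultimately show ?thesis
        by (simp add: p risk_integrand_def ln_div algebra_simps)
    qed
  qed
qed

lemma bayes_risk_unif_minus_bayes:
  assumes U: "finite_bayes_risk f \<pi> (unif_pred f)" and B: "finite_bayes_risk f \<pi> (bayes_pred f \<pi>)"
  shows "bayes_risk f \<pi> (unif_pred f) - bayes_risk f \<pi> (bayes_pred f \<pi>)
       = (\<integral>x. KL_div (bayes_pred f \<pi> x) (unif_pred f x) * marginal f \<pi> x \<partial>lborel)"
proof -
  let ?D = "\<lambda>(x, y, \<theta>).
    ln (bayes_pred f \<pi> x y / unif_pred f x y) * loc_dens f y \<theta> * loc_dens f x \<theta> * \<pi> \<theta>"
  have IU: "integrable (lborel \<Otimes>\<^sub>M lborel \<Otimes>\<^sub>M lborel) (risk_integrand f \<pi> (unif_pred f))"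
    using U unfolding finite_bayes_risk_def risk_integrand_def .
  have IB: "integrable (lborel \<Otimes>\<^sub>M lborel \<Otimes>\<^sub>M lborel) (risk_integrand f \<pi> (bayes_pred f \<pi>))"
    using B unfolding finite_bayes_risk_def risk_integrand_def .
  have D_borel: "?D \<in> borel_measurable (lborel \<Otimes>\<^sub>M lborel \<Otimes>\<^sub>M lborel)"
    unfolding bayes_pred_def unif_pred_def marginal_def loc_dens_def by measurable
  have ID: "integrable (lborel \<Otimes>\<^sub>M lborel \<Otimes>\<^sub>M lborel) ?D"
    using Bochner_Integration.integrable_diff[OF IU IB] D_borel risk_integrand_diff_AE by (rule integrable_cong_AE_imp)
  have "bayes_risk f \<pi> (unif_pred f) - bayes_risk f \<pi> (bayes_pred f \<pi>)
      = (\<integral>p. risk_integrand f \<pi> (unif_pred f) p - risk_integrand f \<pi> (bayes_pred f \<pi>) p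
           \<partial>(lborel \<Otimes>\<^sub>M lborel \<Otimes>\<^sub>M lborel))"
    using IU IB by (simp add: bayes_risk_eq_integral[OF U] bayes_risk_eq_integral[OF B])
  also have "\<dots> = integral\<^sup>L (lborel \<Otimes>\<^sub>M lborel \<Otimes>\<^sub>M lborel) ?D"
    using Bochner_Integration.integrable_diff[OF IU IB] D_borel risk_integrand_diff_AE
    by (intro integral_cong_AE) auto
  also have "\<dots> = (\<integral>x. \<integral>y. \<integral>\<theta>. ?D (x, y, \<theta>) \<partial>lborel \<partial>lborel \<partial>lborel)"
    by (rule lborel.integral_triple[OF ID])
  also have "\<dots> = (\<integral>x. KL_div (bayes_pred f \<pi> x) (unif_pred f x) * marginal f \<pi> x \<partial>lborel)"
  proof (intro Bochner_Integration.integral_cong refl)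
    fix x
    have "(\<integral>\<theta>. ?D (x, y, \<theta>) \<partial>lborel)
        = ln (bayes_pred f \<pi> x y / unif_pred f x y) * bayes_pred f \<pi> x y * marginal f \<pi> x" for y
      using marginal_pos[of x] by (simp add: joint_marginal_def bayes_pred_eq mult.assoc)
    then show "(\<integral>y. \<integral>\<theta>. ?D (x, y, \<theta>) \<partial>lborel \<partial>lborel)
        = KL_div (bayes_pred f \<pi> x) (unif_pred f x) * marginal f \<pi> x"
      by (simp add: KL_div_def)
  qed
  finally show ?thesis .
qed

end

theorem lemma1:
  fixes A :: "'a::euclidean_space \<Rightarrow> 'a" and \<nu> :: "'a measure" and \<gamma> :: 'a
    and f :: "'a \<Rightarrow> real" and \<pi> :: "'a \<Rightarrow> real"
  assumes "ID_density A \<nu> \<gamma> f"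
    and "\<pi> \<in> borel_measurable lborel" and "\<And>\<theta>. 0 \<le> \<pi> \<theta>"
    and "\<And>x. integrable lborel (\<lambda>\<theta>. loc_dens f x \<theta> * \<pi> \<theta>)"
    and "\<And>x. 0 < marginal f \<pi> x"
    and "finite_bayes_risk f \<pi> (unif_pred f)"
    and "finite_bayes_risk f \<pi> (bayes_pred f \<pi>)"
  shows "(bayes_risk f \<pi> (unif_pred f) - bayes_risk f \<pi> (bayes_pred f \<pi>)
           = (\<integral>x. KL_div (bayes_pred f \<pi> x) (unif_pred f x) * marginal f \<pi> x \<partial>lborel))
         \<and> (\<forall>x. (\<integral>y. bayes_pred f \<pi> y x * marginal f \<pi> y \<partial>lborel) = marginal f \<pi> x)"
proof -
  interpret location_model f
    using assms(1) by (rule ID_density_location_model)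
  interpret location_prior f \<pi>
    using assms(2-5) by unfold_locales simp_all
  show ?thesis
    using bayes_risk_unif_minus_bayes[OF assms(6,7)] bayes_pred_invariant by blast
qed

end
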